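(* Let $\underline a=\{a_i\}_{i\in I}$ be a pseudo-Cauchy sequence in $K$ such that $I^*$ has no maximum, and such that either $\underline a$ is of transcendental type, or $\underline a$ is of algebraic type with $\gamma_{\underline a}\neq\infty$. Let $g\in K[x]$ be such that every polynomial of degree smaller than $\deg g$ is fixed by $\underline a$. Then $v(g(a_i))=\nu_i(g)$ for all sufficiently large $i\in I^*$.
   Context: $(K,v)$ is a valued field with value group $\Gamma$. A pseudo-Cauchy sequence is $\underline a=\{a_i\}_{i\in I}\subseteq K$ with $I$ a well-ordered set of at least two elements such that $v(a_i-a_j)<v(a_j-a_k)$ whenever $i<j<k$. $I^*=I\setminus\{\max I\}$ if $I$ has a maximum, else $I^*=I$. For $i\in I^*$, $\gamma_i:=v(a_{i+1}-a_i)$ ($i+1$ the successor of $i$) and $\nu_i:=v_{a_i,\gamma_i}$, where $v_{a,\gamma}(\sum_k b_k(x-a)^k)=\min_k\{v(b_k)+k\gamma\}$. A polynomial $f$ is fixed by $\underline a$ if $\{v(f(a_i))\}_{i\in I}$ is ultimately constant. When $I^*$ has no maximum, $\underline a$ is of transcendental type if every $f\in K[x]$ is fixed by $\underline a$, and of algebraic type otherwise. For $\underline a$ of algebraic type, let $F$ be a monic polynomial of smallest degree not fixed by $\underline a$, $D=\{\alpha\in\Gamma_{\mathbb Q}\mid\alpha\le\nu_i(F)\text{ for some }i\in I^*\}$ ($\Gamma_{\mathbb Q}$ the divisible hull of $\Gamma$), and $\gamma_{\underline a}=\infty$ if $D=\Gamma_{\mathbb Q}$, and otherwise $\gamma_{\underline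 a}$ is the element of the universal ordered group realizing the quasi-cut $(D,\Gamma_{\mathbb Q}\setminus D)$ (in particular $\gamma_{\underline a}\neq\infty$ iff $D\neq\Gamma_{\mathbb Q}$). *)

theory Defs
  imports "HOL-Computational_Algebra.Polynomial" "HOL-Library.Extended"
begin

definition valuation :: "('a::field \<Rightarrow> 'g::linordered_ab_group_add extended) \<Rightarrow> bool" where
  "valuation v \<longleftrightarrow>
     (\<forall>x. v x = Pinf \<longleftrightarrow> x = 0) \<and>
     (\<forall>x. x \<noteq> 0 \<longrightarrow> v x \<in> range Fin) \<and>
     (\<forall>x y. v (x * y) = v x + v y) \<and>
     (\<forall>x y. min (v x) (v y) \<le> v (x + y))"

definition value_group :: "('a::field \<Rightarrow> 'g::linordered_ab_group_add extended) \<Rightarrow> 'g set" where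
  "value_group v = {g. Fin g \<in> range v}"

definition nsmul :: "nat \<Rightarrow> 'b::comm_monoid_add \<Rightarrow> 'b" where
  "nsmul n x = (\<Sum>_<n. x)"

definition pseudo_cauchy :: "('a::field \<Rightarrow> 'g::linordered_ab_group_add extended) \<Rightarrow> 'i::wellorder set \<Rightarrow> ('i \<Rightarrow> 'a) \<Rightarrow> bool" where
  "pseudo_cauchy v I a \<longleftrightarrow>
     (\<exists>i\<in>I. \<exists>j\<in>I. i \<noteq> j) \<and>
     (\<forall>i\<in>I. \<forall>j\<in>I. \<forall>k\<in>I. i < j \<and> j < k \<longrightarrow> v (a i - a j) < v (a j - a k))"

definition Istar :: "'i::wellorder set \<Rightarrow> 'i set" where
  "Istar I = {i\<in>I. \<exists>j\<in>I. i < j}"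

definition has_max :: "'i::linorder set \<Rightarrow> bool" where
  "has_max S \<longleftrightarrow> (\<exists>m\<in>S. \<forall>i\<in>S. i \<le> m)"

definition succ_in :: "'i::wellorder set \<Rightarrow> 'i \<Rightarrow> 'i" where
  "succ_in I i = (LEAST j. j \<in> I \<and> i < j)"

definition pc_gamma :: "('a::field \<Rightarrow> 'g::linordered_ab_group_add extended) \<Rightarrow> 'i::wellorder set \<Rightarrow> ('i \<Rightarrow> 'a) \<Rightarrow> 'i \<Rightarrow> 'g extended" where
  "pc_gamma v I a i = v (a (succ_in I i) - a i)"

text \<open>Monomial valuation v_{a,gamma}: writing f = sum_k b_k (x-a)^k, the minimum of
  v(b_k) + k gamma. The b_k are the coefficients of f(x + a).\<close>
definition mono_val :: "('a::field \<Rightarrow> 'g::linordered_ab_group_add extended) \<Rightarrow> 'a \<Rightarrow> 'g extended \<Rightarrow> 'a poly \<Rightarrow> 'g extended" where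
  "mono_val v c \<gamma> f = Min ((\<lambda>k. v (coeff (pcompose f [:c, 1:]) k) + nsmul k \<gamma>) ` {..degree f})"

definition pc_nu :: "('a::field \<Rightarrow> 'g::linordered_ab_group_add extended) \<Rightarrow> 'i::wellorder set \<Rightarrow> ('i \<Rightarrow> 'a) \<Rightarrow> 'i \<Rightarrow> 'a poly \<Rightarrow> 'g extended" where
  "pc_nu v I a i = mono_val v (a i) (pc_gamma v I a i)"

definition fixed_by :: "('a::field \<Rightarrow> 'g::linordered_ab_group_add extended) \<Rightarrow> 'i::wellorder set \<Rightarrow> ('i \<Rightarrow> 'a) \<Rightarrow> 'a poly \<Rightarrow> bool" where
  "fixed_by v I a f \<longleftrightarrow>
     (\<exists>i0\<in>I. \<forall>i\<in>I. \<forall>j\<in>I. i0 \<le> i \<and> i0 \<le> j \<longrightarrow> v (poly f (a i)) = v (poly f (a j)))"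

definition transcendental_type :: "('a::field \<Rightarrow> 'g::linordered_ab_group_add extended) \<Rightarrow> 'i::wellorder set \<Rightarrow> ('i \<Rightarrow> 'a) \<Rightarrow> bool" where
  "transcendental_type v I a \<longleftrightarrow> (\<forall>f. fixed_by v I a f)"

definition algebraic_type :: "('a::field \<Rightarrow> 'g::linordered_ab_group_add extended) \<Rightarrow> 'i::wellorder set \<Rightarrow> ('i \<Rightarrow> 'a) \<Rightarrow> bool" where
  "algebraic_type v I a \<longleftrightarrow> \<not> transcendental_type v I a"

definition minimal_unfixed :: "('a::field \<Rightarrow> 'g::linordered_ab_group_add extended) \<Rightarrow> 'i::wellorder set \<Rightarrow> ('i \<Rightarrow> 'a) \<Rightarrow> 'a poly \<Rightarrow> bool" where
  "minimal_unfixed v I a F \<longleftrightarrow>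
     lead_coeff F = 1 \<and> \<not> fixed_by v I a F \<and>
     (\<forall>G. lead_coeff G = 1 \<and> \<not> fixed_by v I a G \<longrightarrow> degree F \<le> degree G)"

text \<open>D = {alpha in Gamma_Q | alpha <= nu_i(F) for some i in I^*}. An element of the
  divisible hull Gamma_Q is alpha = g/n with g in Gamma, n >= 1; for beta in Gamma
  (or infinity), g/n <= beta iff g <= n*beta. The set D equals Gamma_Q unless some alpha
  lies outside D. gamma_a /= infinity iff D /= Gamma_Q.\<close>
definition in_D :: "('a::field \<Rightarrow> 'g::linordered_ab_group_add extended) \<Rightarrow> 'i::wellorder set \<Rightarrow> ('i \<Rightarrow> 'a) \<Rightarrow> 'a poly \<Rightarrow> 'g \<Rightarrow> nat \<Rightarrow> bool" where
  "in_D v I a F g n \<longleftrightarrow> (\<exists>i\<in>Istar I. Fin g \<le> nsmul n (pc_nu v I a i F))"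

definition D_is_all :: "('a::field \<Rightarrow> 'g::linordered_ab_group_add extended) \<Rightarrow> 'i::wellorder set \<Rightarrow> ('i \<Rightarrow> 'a) \<Rightarrow> 'a poly \<Rightarrow> bool" where
  "D_is_all v I a F \<longleftrightarrow> (\<forall>g\<in>value_group v. \<forall>n>0. in_D v I a F g n)"

definition gamma_finite :: "('a::field \<Rightarrow> 'g::linordered_ab_group_add extended) \<Rightarrow> 'i::wellorder set \<Rightarrow> ('i \<Rightarrow> 'a) \<Rightarrow> bool" where
  "gamma_finite v I a \<longleftrightarrow> (\<exists>F. minimal_unfixed v I a F \<and> \<not> D_is_all v I a F)"

end

theory Submission
  imports Defs
begin

text \<open>
  Expanding g at a point c as g(y) = \<Sum> b_k (y - c)^k, the value v(g(y)) is the minimum of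
  the values v(b_k) + k v(y - c) whenever that minimum is attained only once. As functions of
  \<gamma>, the values v(b_k) + k \<gamma> are lines of distinct slopes, so along the strictly increasing
  \<gamma>_i they are eventually pairwise distinct.

  If I has a last element m, then v(a_i - a_m) = \<gamma>_i and \<nu>_i is also the monomial valuation
  centred at a_m; expanding at a_m gives v(g(a_i)) = \<nu>_i(g) eventually.

  Otherwise the Taylor coefficients of g at a_i of order k \<ge> 1 are values of Hasse
  derivatives, of degree below deg g, so their values are ultimately constant. Always
  \<nu>_i(g) \<le> v(g(a_i)); if the inequality is strict at one late index i, the minimum is
  attained at a unique order h \<ge> 1, and expanding at a_i shows that for all j > i the value
  v(g(a_j)) is that minimum, which lies below every term defining \<nu>_j(g); hence
  v(g(a_j)) = \<nu>_j(g).
\<close>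

lemma val_eq_Pinf_iff: "valuation v \<Longrightarrow> v x = Pinf \<longleftrightarrow> x = 0"
  unfolding valuation_def by blast

lemma val_zero [simp]: "valuation v \<Longrightarrow> v 0 = Pinf"
  by (simp add: val_eq_Pinf_iff)

lemma val_mult: "valuation v \<Longrightarrow> v (x * y) = v x + v y"
  unfolding valuation_def by blast

lemma val_add_ge: "valuation v \<Longrightarrow> min (v x) (v y) \<le> v (x + y)"
  unfolding valuation_def by blast

lemma val_Fin: assumes "valuation v" "x \<noteq> 0" obtains c where "v x = Fin c"
  using assms unfolding valuation_def by blast

lemma val_neq_Minf: assumes "valuation v" shows "v x \<noteq> Minf"
  using assms by (cases "x = 0") (auto elim: val_Fin)

lemma val_double_eq_0:
  assumes "valuation v" "x \<noteq> 0" "v x + v x = 0"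
  shows "v x = 0"
proof -
  obtain c where c: "v x = Fin c" using val_Fin[OF assms(1,2)] .
  then have "c + c = 0" using assms(3) by (simp add: zero_extended_def)
  then have "c = 0"
    using add_pos_pos[of c c] add_neg_neg[of c c] by (cases rule: linorder_cases[of c 0]) auto
  then show ?thesis using c by (simp add: zero_extended_def)
qed

lemma val_one [simp]: assumes "valuation v" shows "v 1 = 0"
proof -
  obtain c where c: "v 1 = Fin c" using val_Fin[OF assms, of 1] by auto
  have "Fin c = Fin c + Fin c" using val_mult[OF assms, of 1 1] c by simp
  then show ?thesis using c by (simp add: zero_extended_def)
qed

lemma val_uminus [simp]: assumes "valuation v" shows "v (- x) = v x"
proof -
  have "v (-1) = 0"
    using val_double_eq_0[OF assms, of "-1"] val_mult[OF assms, of "-1" "-1"] assms by simp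
  then show ?thesis using val_mult[OF assms, of "-1" x] by simp
qed

lemma val_diff_commute: "valuation v \<Longrightarrow> v (x - y) = v (y - x)"
  using val_uminus[of v "x - y"] by simp

lemma val_add_eq_of_less: assumes "valuation v" "v x < v y" shows "v (x + y) = v x"
proof -
  have "min (v (x + y)) (v (- y)) \<le> v ((x + y) + - y)" by (rule val_add_ge[OF assms(1)])
  then have "min (v (x + y)) (v y) \<le> v x" using assms(1) by simp
  then show ?thesis using val_add_ge[OF assms(1), of x y] assms(2) by (auto simp: min_def split: if_splits)
qed

lemma Pinf_add [simp]: "Pinf + (x::'a::plus extended) = Pinf"
  by (cases x) auto

lemma add_Fin_eq_Pinf_iff [simp]: "x + Fin y = Pinf \<longleftrightarrow> x = Pinf"
  by (cases x) auto

lemma nsmul_0 [simp]: "nsmul 0 x = 0"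
  by (simp add: nsmul_def)

lemma nsmul_Suc: "nsmul (Suc n) x = nsmul n x + x"
  by (simp add: nsmul_def)

lemma nsmul_add: "nsmul (m + n) x = nsmul m x + nsmul n x"
  by (induct n) (simp_all add: nsmul_Suc add.assoc)

lemma nsmul_Fin: "nsmul n (Fin x) = Fin (nsmul n x)"
  by (induct n) (simp_all add: nsmul_Suc zero_extended_def)

lemma nsmul_extended_mono:
  "(x::'a::{ordered_ab_semigroup_add,comm_monoid_add} extended) \<le> y \<Longrightarrow> nsmul n x \<le> nsmul n y"
  by (induct n) (simp_all add: nsmul_Suc add_mono)

lemma nsmul_add_right: "nsmul n ((x::'a::comm_monoid_add) + y) = nsmul n x + nsmul n y"
  by (induct n) (simp_all add: nsmul_Suc algebra_simps)

lemma nsmul_pos: "(0::'g::linordered_ab_group_add) < x \<Longrightarrow> 0 < n \<Longrightarrow> 0 < nsmul n x"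
proof (induct n)
  case (Suc n) then show ?case by (cases n) (auto simp: nsmul_Suc intro: add_pos_pos)
qed simp

lemma nsmul_strict_mono_nat:
  assumes "(0::'g::linordered_ab_group_add) < \<delta>" "k < l"
  shows "nsmul k \<delta> < nsmul l \<delta>"
proof -
  have "0 < nsmul (l - k) \<delta>" using nsmul_pos[OF assms(1)] assms(2) by simp
  then show ?thesis using nsmul_add[of k "l - k" \<delta>] assms(2) by simp
qed

lemma val_power: "valuation v \<Longrightarrow> v (x ^ n) = nsmul n (v x)"
  by (induct n) (simp_all add: nsmul_Suc val_mult add.commute)

lemma val_of_nat_nonneg: assumes "valuation v" shows "0 \<le> v (of_nat n)"
proof (induct n)
  case (Suc n)
  then show ?case using val_add_ge[OF assms, of 1 "of_nat n"] assms by (auto simp: min_def split: if_splits)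
qed (simp add: assms)

text \<open>The offset e stands in for a subtraction, which the extended value group lacks.\<close>

lemma val_sum_ge:
  assumes "valuation v" "finite A" "\<forall>k\<in>A. m \<le> v (t k) + e"
  shows "m \<le> v (sum t A) + e"
  using assms(2,3)
proof (induct A rule: finite_induct)
  case empty
  then show ?case using assms(1) by simp
next
  case (insert x F)
  have "min (v (t x)) (v (sum t F)) + e \<le> v (t x + sum t F) + e"
    by (intro add_right_mono val_add_ge[OF assms(1)])
  then show ?case using insert by (auto simp: min_def split: if_splits)
qed

lemma val_sum_eq_of_unique_min:
  assumes "valuation v" "finite A" "h \<in> A" "\<forall>k\<in>A. k \<noteq> h \<longrightarrow> v (t h) < v (t k)"
  shows "v (sum t A) = v (t h)"
proof (cases "A - {h} = {}")
  case True
  then have "A = {h}" using assms(3) by auto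
  then show ?thesis by simp
next
  case False
  let ?M = "Min ((\<lambda>k. v (t k)) ` (A - {h}))"
  have "?M \<le> v (sum t (A - {h})) + 0"
    using assms(2) by (intro val_sum_ge[OF assms(1)]) auto
  moreover have "v (t h) < ?M"
    using False assms(2,4) by (subst Min_gr_iff) auto
  ultimately have "v (t h) < v (sum t (A - {h}))" by simp
  then show ?thesis using val_add_eq_of_less[OF assms(1)] by (simp add: sum.remove[OF assms(2,3)])
qed

lemma Min_attained_strictly:
  fixes f :: "'k \<Rightarrow> 'g::linorder extended"
  assumes "finite A" "A \<noteq> {}" "Min (f ` A) \<noteq> Pinf"
    and inj: "\<forall>k\<in>A. \<forall>l\<in>A. k \<noteq> l \<longrightarrow> f k \<noteq> Pinf \<longrightarrow> f k \<noteq> f l"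
  obtains h where "h \<in> A" "f h = Min (f ` A)" "\<forall>k\<in>A. k \<noteq> h \<longrightarrow> f h < f k"
proof -
  have "Min (f ` A) \<in> f ` A" using assms(1,2) by (intro Min_in) auto
  then obtain h where h: "h \<in> A" "f h = Min (f ` A)" by auto
  have "f h < f k" if "k \<in> A" "k \<noteq> h" for k
    using h assms(1,3) inj that by (metis Min_le finite_imageI image_eqI order_le_less)
  then show ?thesis using that h by blast
qed

lemma val_sum_eq_Min:
  assumes "valuation v" "finite A" "A \<noteq> {}"
    "\<forall>k\<in>A. \<forall>l\<in>A. k \<noteq> l \<longrightarrow> v (t k) \<noteq> Pinf \<longrightarrow> v (t k) \<noteq> v (t l)"
  shows "v (sum t A) = Min ((\<lambda>k. v (t k)) ` A)"
proof (cases "Min ((\<lambda>k. v (t k)) ` A) = Pinf")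
  case True
  then have "Pinf \<le> v (sum t A) + 0"
    using assms(2) by (intro val_sum_ge[OF assms(1,2)]) (metis Min_le add_0_right finite_imageI imageI)
  then show ?thesis using True by simp
next
  case False
  then obtain h where "h \<in> A" "v (t h) = Min ((\<lambda>k. v (t k)) ` A)" "\<forall>k\<in>A. k \<noteq> h \<longrightarrow> v (t h) < v (t k)"
    using Min_attained_strictly[OF assms(2,3) _ assms(4)] by blast
  then show ?thesis using val_sum_eq_of_unique_min[OF assms(1,2)] by metis
qed

lemma coeff_pcompose_linear:
  "coeff (pcompose p [:c, 1:]) l =
     (\<Sum>n\<le>degree p. coeff p n * of_nat (n choose l) * (c::'a::comm_ring_1) ^ (n - l))"
proof -
  have coeff_power: "coeff ([:c, 1:] ^ n) l = of_nat (n choose l) * c ^ (n - l)" for n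
  proof (cases "l \<le> n")
    case True then show ?thesis using coeff_linear_poly_power[of l n c 1] by simp
  next
    case False then show ?thesis by (simp add: coeff_eq_0 degree_linear_power binomial_eq_0)
  qed
  have "pcompose p [:c, 1:] = (\<Sum>n\<le>degree p. smult (coeff p n) ([:c, 1:] ^ n))"
  proof -
    have "pcompose (monom a n) q = smult a (q ^ n)" for a n and q :: "'a poly"
      by (induct n) (simp_all add: monom_0 monom_Suc pcompose_pCons)
    then show ?thesis
      by (subst poly_as_sum_of_monoms[symmetric, of p]) (simp add: pcompose_sum)
  qed
  then show ?thesis by (simp add: coeff_sum coeff_power mult.assoc)
qed

lemma degree_pcompose_linear [simp]: "degree (pcompose p [:c, 1:]) = degree (p::'a::idom poly)"
  by (simp add: degree_pcompose)

lemma pcompose_linear_linear: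
  "pcompose (pcompose p [:c, 1:]) [:d, 1:] = pcompose p [:c + d, (1::'a::comm_ring_1):]"
  by (simp add: pcompose_assoc[symmetric] pcompose_pCons algebra_simps)

lemma poly_taylor_expansion:
  "poly p (y::'a::idom) = (\<Sum>k\<le>degree p. coeff (pcompose p [:c, 1:]) k * (y - c) ^ k)"
  using poly_altdef[of "pcompose p [:c, 1:]" "y - c"] by (simp add: poly_pcompose)

definition hasse_deriv :: "'a::comm_ring_1 poly \<Rightarrow> nat \<Rightarrow> 'a poly" where
  "hasse_deriv p k = (\<Sum>n\<le>degree p. monom (coeff p n * of_nat (n choose k)) (n - k))"

lemma poly_hasse_deriv: "poly (hasse_deriv p k) c = coeff (pcompose p [:c, 1:]) k"
  by (simp add: hasse_deriv_def poly_sum poly_monom coeff_pcompose_linear)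

lemma degree_hasse_deriv: "degree (hasse_deriv p k) \<le> degree p - k"
  unfolding hasse_deriv_def
  by (rule degree_le) (auto simp: coeff_sum coeff_monom intro!: sum.neutral)

definition mono_val_term ::
    "('a::field \<Rightarrow> 'g::linordered_ab_group_add extended) \<Rightarrow> 'a poly \<Rightarrow> 'a \<Rightarrow> 'g extended \<Rightarrow> nat \<Rightarrow> 'g extended" where
  "mono_val_term v p c \<gamma> k = v (coeff (pcompose p [:c, 1:]) k) + nsmul k \<gamma>"

lemma mono_val_eq_Min: "mono_val v c \<gamma> p = Min (mono_val_term v p c \<gamma> ` {..degree p})"
  by (simp add: mono_val_def mono_val_term_def)

lemma mono_val_le_term: "k \<le> degree p \<Longrightarrow> mono_val v c \<gamma> p \<le> mono_val_term v p c \<gamma> k"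
  unfolding mono_val_eq_Min by (intro Min_le) auto

lemma mono_val_term_0 [simp]: "mono_val_term v p c \<gamma> 0 = v (poly p c)"
  by (simp add: mono_val_term_def poly_0_coeff_0[symmetric] poly_pcompose)

lemma mono_val_eq_val_poly:
  "\<forall>k\<le>degree p. v (poly p c) \<le> mono_val_term v p c \<gamma> k \<Longrightarrow> mono_val v c \<gamma> p = v (poly p c)"
  unfolding mono_val_eq_Min by (intro Min_eqI) (auto intro: image_eqI[of _ _ 0])

lemma val_taylor_summand:
  "valuation v \<Longrightarrow>
     v (coeff (pcompose p [:c, 1:]) k * (y - c) ^ k) = mono_val_term v p c (v (y - c)) k"
  by (simp add: mono_val_term_def val_mult val_power)

lemma mono_val_le_shift:
  assumes "valuation v" "\<gamma> \<le> v \<delta>"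
  shows "mono_val v c \<gamma> p \<le> mono_val v (c + \<delta>) \<gamma> p"
proof -
  let ?q = "pcompose p [:c, 1:]"
  have "mono_val v c \<gamma> p \<le> mono_val_term v p (c + \<delta>) \<gamma> l" if "l \<le> degree p" for l
  proof -
    define t where "t n = coeff ?q n * of_nat (n choose l) * \<delta> ^ (n - l)" for n
    have "coeff (pcompose p [:c + \<delta>, 1:]) l = sum t {..degree p}"
      unfolding t_def pcompose_linear_linear[symmetric] coeff_pcompose_linear by simp
    moreover have "mono_val v c \<gamma> p \<le> v (t n) + nsmul l \<gamma>" if n: "n \<le> degree p" for n
    proof (cases "l \<le> n")
      case False then show ?thesis by (simp add: t_def assms(1) binomial_eq_0)
    next
      case True
      have "mono_val v c \<gamma> p \<le> v (coeff ?q n) + 0 + nsmul (n - l) \<gamma> + nsmul l \<gamma>"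
        using mono_val_le_term[OF n, of v c \<gamma>] True
        by (simp add: mono_val_term_def add.assoc flip: nsmul_add)
      also have "\<dots> \<le> v (t n) + nsmul l \<gamma>"
        unfolding t_def val_mult[OF assms(1)] val_power[OF assms(1)]
        by (intro add_mono order_refl val_of_nat_nonneg[OF assms(1)] nsmul_extended_mono assms(2))
      finally show ?thesis .
    qed
    ultimately show ?thesis
      unfolding mono_val_term_def by (auto intro: val_sum_ge[OF assms(1)])
  qed
  then show ?thesis unfolding mono_val_eq_Min[of v "c + \<delta>"] by (intro Min.boundedI) auto
qed

lemma mono_val_shift:
  assumes "valuation v" "\<gamma> \<le> v (c' - c)"
  shows "mono_val v c' \<gamma> p = mono_val v c \<gamma> p"
  using mono_val_le_shift[OF assms(1,2), of c p] mono_val_le_shift[OF assms(1), of \<gamma> "c - c'" c' p] assms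
  by (simp add: val_diff_commute)

lemma val_poly_eq_mono_val_term:
  assumes "valuation v" "v (y - c) = \<gamma>" "h \<le> degree p"
    "\<forall>k\<le>degree p. k \<noteq> h \<longrightarrow> mono_val_term v p c \<gamma> h < mono_val_term v p c \<gamma> k"
  shows "v (poly p y) = mono_val_term v p c \<gamma> h"
proof -
  let ?t = "\<lambda>k. coeff (pcompose p [:c, 1:]) k * (y - c) ^ k"
  have "v (?t k) = mono_val_term v p c \<gamma> k" for k
    using val_taylor_summand[OF assms(1)] assms(2) by simp
  then show ?thesis unfolding poly_taylor_expansion[of p y c]
    using val_sum_eq_of_unique_min[OF assms(1), of "{..degree p}" h ?t] assms(3,4) by simp
qed

lemma val_poly_eq_mono_val:
  assumes "valuation v" "v (y - c) = \<gamma>"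
    "\<forall>k\<le>degree p. \<forall>l\<le>degree p. k \<noteq> l \<longrightarrow> mono_val_term v p c \<gamma> k \<noteq> Pinf \<longrightarrow>
       mono_val_term v p c \<gamma> k \<noteq> mono_val_term v p c \<gamma> l"
  shows "v (poly p y) = mono_val v c \<gamma> p"
proof -
  let ?t = "\<lambda>k. coeff (pcompose p [:c, 1:]) k * (y - c) ^ k"
  have "v (?t k) = mono_val_term v p c \<gamma> k" for k
    using val_taylor_summand[OF assms(1)] assms(2) by simp
  then show ?thesis unfolding poly_taylor_expansion[of p y c] mono_val_eq_Min
    using val_sum_eq_Min[OF assms(1), of "{..degree p}" ?t] assms(3) by simp
qed

lemma succ_in_mem_gt: assumes "i \<in> Istar I" shows "succ_in I i \<in> I \<and> i < succ_in I i"
proof -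
  obtain j where "j \<in> I" "i < j" using assms by (auto simp: Istar_def)
  then show ?thesis unfolding succ_in_def by (intro LeastI[of "\<lambda>j. j \<in> I \<and> i < j"]) simp
qed

lemma succ_in_le: "j \<in> I \<Longrightarrow> i < j \<Longrightarrow> succ_in I i \<le> j"
  unfolding succ_in_def by (rule Least_le) simp

lemma Istar_subset: "Istar I \<subseteq> I"
  by (auto simp: Istar_def)

lemma Istar_nonempty: assumes "pseudo_cauchy v I a" shows "Istar I \<noteq> {}"
proof -
  obtain i j where "i \<in> I" "j \<in> I" "i \<noteq> j" using assms unfolding pseudo_cauchy_def by auto
  then show ?thesis unfolding Istar_def by (cases i j rule: linorder_cases) auto
qed

lemma Istar_eq_of_not_has_max: "\<not> has_max I \<Longrightarrow> Istar I = I"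
  unfolding has_max_def Istar_def by (auto simp: not_le)

lemma ex_greater_of_not_has_max: "\<not> has_max S \<Longrightarrow> i \<in> S \<Longrightarrow> \<exists>j\<in>S. i < (j::'i::linorder)"
  unfolding has_max_def by (auto simp: not_le)

lemma pseudo_cauchy_val_diff:
  assumes "valuation v" "pseudo_cauchy v I a" "i \<in> Istar I" "j \<in> I" "i < j"
  shows "v (a j - a i) = pc_gamma v I a i"
proof (cases "j = succ_in I i")
  case True then show ?thesis by (simp add: pc_gamma_def)
next
  case False
  let ?s = "succ_in I i"
  have "?s < j" using False succ_in_le[OF assms(4,5)] by simp
  then have "v (a i - a ?s) < v (a ?s - a j)"
    using assms(2-4) succ_in_mem_gt[OF assms(3)] Istar_subset unfolding pseudo_cauchy_def by blast
  then have "v ((a ?s - a i) + (a j - a ?s)) = v (a ?s - a i)"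
    using val_add_eq_of_less[OF assms(1)] val_diff_commute[OF assms(1)] by metis
  then show ?thesis by (simp add: pc_gamma_def)
qed

lemma pc_gamma_strict_mono:
  assumes "valuation v" "pseudo_cauchy v I a" "i \<in> Istar I" "j \<in> Istar I" "i < j"
  shows "pc_gamma v I a i < pc_gamma v I a j"
proof -
  have I: "i \<in> I" "j \<in> I" using assms(3,4) Istar_subset by auto
  have "pc_gamma v I a i = v (a i - a j)"
    using pseudo_cauchy_val_diff[OF assms(1-3) I(2) assms(5)] val_diff_commute[OF assms(1)] by simp
  also have "\<dots> < v (a j - a (succ_in I j))"
    using assms(2,5) I succ_in_mem_gt[OF assms(4)] unfolding pseudo_cauchy_def by blast
  also have "\<dots> = pc_gamma v I a j"
    unfolding pc_gamma_def by (rule val_diff_commute[OF assms(1)])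
  finally show ?thesis .
qed

lemma pc_gamma_Fin:
  assumes "valuation v" "pseudo_cauchy v I a" "\<not> has_max (Istar I)"
  obtains \<gamma> where "\<forall>i\<in>Istar I. pc_gamma v I a i = Fin (\<gamma> i)" "strict_mono_on (Istar I) \<gamma>"
proof
  define \<gamma> where "\<gamma> i = (case pc_gamma v I a i of Fin x \<Rightarrow> x)" for i
  show fin: "\<forall>i\<in>Istar I. pc_gamma v I a i = Fin (\<gamma> i)"
  proof
    fix i assume i: "i \<in> Istar I"
    then obtain j where "j \<in> Istar I" "i < j" using ex_greater_of_not_has_max[OF assms(3)] by blast
    then have "pc_gamma v I a i \<noteq> Pinf" using pc_gamma_strict_mono[OF assms(1,2) i] by force
    moreover have "pc_gamma v I a i \<noteq> Minf" unfolding pc_gamma_def by (rule val_neq_Minf[OF assms(1)])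
    ultimately show "pc_gamma v I a i = Fin (\<gamma> i)" unfolding \<gamma>_def by (cases "pc_gamma v I a i") auto
  qed
  show "strict_mono_on (Istar I) \<gamma>"
    using pc_gamma_strict_mono[OF assms(1,2)] fin by (intro strict_mono_onI) fastforce
qed

definition eventually_in :: "'i::linorder set \<Rightarrow> ('i \<Rightarrow> bool) \<Rightarrow> bool" where
  "eventually_in S P \<longleftrightarrow> (\<exists>i0\<in>S. \<forall>i\<in>S. i0 \<le> i \<longrightarrow> P i)"

lemma eventually_in_conj: "eventually_in S P \<Longrightarrow> eventually_in S Q \<Longrightarrow> eventually_in S (\<lambda>i. P i \<and> Q i)"
  unfolding eventually_in_def by (metis max.bounded_iff max_def)

lemma eventually_in_mono: "eventually_in S P \<Longrightarrow> (\<And>i. i \<in> S \<Longrightarrow> P i \<Longrightarrow> Q i) \<Longrightarrow> eventually_in S Q"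
  unfolding eventually_in_def by blast

lemma eventually_in_True: "S \<noteq> {} \<Longrightarrow> eventually_in S (\<lambda>i. True)"
  unfolding eventually_in_def by auto

lemma eventually_in_ball_finite:
  assumes "S \<noteq> {}" "finite K" "\<forall>k\<in>K. eventually_in S (P k)"
  shows "eventually_in S (\<lambda>i. \<forall>k\<in>K. P k i)"
  using assms(2,3)
proof (induct K rule: finite_induct)
  case empty then show ?case using eventually_in_True[OF assms(1)] by simp
next
  case (insert x F)
  then have "eventually_in S (\<lambda>i. P x i \<and> (\<forall>k\<in>F. P k i))" by (intro eventually_in_conj) auto
  then show ?case by (rule eventually_in_mono) auto
qed

lemma nsmul_lines_meet_once:
  fixes x y :: "'g::linordered_ab_group_add"
  assumes "c + nsmul k x = c' + nsmul l x" "c + nsmul k y = c' + nsmul l y" "x < y"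
  shows "k = l"
proof (rule ccontr)
  assume "k \<noteq> l"
  have split: "nsmul n y = nsmul n x + nsmul n (y - x)" for n
    using nsmul_add_right[of n x "y - x"] by simp
  have "(c + nsmul k x) + nsmul k (y - x) = (c' + nsmul l x) + nsmul l (y - x)"
    using assms(2) unfolding split by (simp add: add.assoc)
  then have "nsmul k (y - x) = nsmul l (y - x)" using assms(1) by simp
  moreover have "0 < y - x" using assms(3) by simp
  ultimately show False
    using nsmul_strict_mono_nat \<open>k \<noteq> l\<close> by (cases k l rule: linorder_cases) fastforce+
qed

lemma eventually_nsmul_lines_neq:
  fixes \<gamma> :: "'i::linorder \<Rightarrow> 'g::linordered_ab_group_add"
  assumes "\<not> has_max S" "S \<noteq> {}" "strict_mono_on S \<gamma>" "k \<noteq> l"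
  shows "eventually_in S (\<lambda>i. Fin c + nsmul k (Fin (\<gamma> i)) \<noteq> C + nsmul l (Fin (\<gamma> i)))"
proof (cases "\<exists>c' t. C = Fin c' \<and> t \<in> S \<and> c + nsmul k (\<gamma> t) = c' + nsmul l (\<gamma> t)")
  case True
  then obtain c' t where t: "C = Fin c'" "t \<in> S" "c + nsmul k (\<gamma> t) = c' + nsmul l (\<gamma> t)" by blast
  obtain j where j: "j \<in> S" "t < j" using ex_greater_of_not_has_max[OF assms(1) t(2)] by blast
  have "c + nsmul k (\<gamma> i) \<noteq> c' + nsmul l (\<gamma> i)" if "i \<in> S" "j \<le> i" for i
    using nsmul_lines_meet_once[OF t(3)] strict_mono_onD[OF assms(3) t(2) that(1)] j that assms(4) by force
  then show ?thesis unfolding eventually_in_def using j(1) t(1) by (auto simp: nsmul_Fin)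
next
  case False
  then show ?thesis using assms(2) unfolding eventually_in_def by (cases C) (auto simp: nsmul_Fin)
qed

lemma eventually_lines_distinct:
  fixes \<gamma> :: "'i::linorder \<Rightarrow> 'g::linordered_ab_group_add" and C :: "nat \<Rightarrow> 'g extended"
  assumes "\<not> has_max S" "S \<noteq> {}" "strict_mono_on S \<gamma>" "finite K" "\<forall>k\<in>K. C k \<noteq> Minf"
  shows "eventually_in S (\<lambda>i. \<forall>k\<in>K. \<forall>l\<in>K. k \<noteq> l \<longrightarrow> C k \<noteq> Pinf \<longrightarrow>
           C k + nsmul k (Fin (\<gamma> i)) \<noteq> C l + nsmul l (Fin (\<gamma> i)))"
proof (intro eventually_in_ball_finite[OF assms(2,4)] ballI)
  fix k l assume k: "k \<in> K"
  show "eventually_in S (\<lambda>i. k \<noteq> l \<longrightarrow> C k \<noteq> Pinf \<longrightarrow>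
          C k + nsmul k (Fin (\<gamma> i)) \<noteq> C l + nsmul l (Fin (\<gamma> i)))"
  proof (cases "k \<noteq> l \<and> C k \<noteq> Pinf")
    case True
    then obtain c where "C k = Fin c" using assms(5) k by (cases "C k") auto
    then show ?thesis
      using eventually_nsmul_lines_neq[OF assms(1-3), of k l c "C l"] True by (auto elim: eventually_in_mono)
  next
    case False
    then show ?thesis using eventually_in_True[OF assms(2)] by (auto elim: eventually_in_mono)
  qed
qed

lemma val_poly_eq_pc_nu_of_has_max:
  assumes V: "valuation v" and P: "pseudo_cauchy v I a" and nm: "\<not> has_max (Istar I)"
    and "has_max I"
  shows "eventually_in (Istar I) (\<lambda>i. v (poly g (a i)) = pc_nu v I a i g)"
proof -
  obtain m where m: "m \<in> I" "\<forall>i\<in>I. i \<le> m" using assms(4) unfolding has_max_def by blast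
  obtain \<gamma> where \<gamma>: "\<forall>i\<in>Istar I. pc_gamma v I a i = Fin (\<gamma> i)" "strict_mono_on (Istar I) \<gamma>"
    using pc_gamma_Fin[OF V P nm] by blast
  have lim: "v (a m - a i) = Fin (\<gamma> i)" if i: "i \<in> Istar I" for i
  proof -
    have "i < m" using i m unfolding Istar_def by force
    then show ?thesis using pseudo_cauchy_val_diff[OF V P i m(1)] \<gamma>(1) i by simp
  qed
  let ?C = "\<lambda>k. v (coeff (pcompose g [:a m, 1:]) k)"
  have "eventually_in (Istar I) (\<lambda>i. \<forall>k\<in>{..degree g}. \<forall>l\<in>{..degree g}. k \<noteq> l \<longrightarrow> ?C k \<noteq> Pinf \<longrightarrow>
          ?C k + nsmul k (Fin (\<gamma> i)) \<noteq> ?C l + nsmul l (Fin (\<gamma> i)))"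
    using Istar_nonempty[OF P] val_neq_Minf[OF V] by (intro eventually_lines_distinct[OF nm _ \<gamma>(2)]) auto
  then show ?thesis
  proof (rule eventually_in_mono)
    fix i assume i: "i \<in> Istar I"
      and distinct: "\<forall>k\<in>{..degree g}. \<forall>l\<in>{..degree g}. k \<noteq> l \<longrightarrow> ?C k \<noteq> Pinf \<longrightarrow>
          ?C k + nsmul k (Fin (\<gamma> i)) \<noteq> ?C l + nsmul l (Fin (\<gamma> i))"
    have "v (poly g (a i)) = mono_val v (a m) (Fin (\<gamma> i)) g"
      using distinct lim[OF i] val_diff_commute[OF V]
      by (intro val_poly_eq_mono_val[OF V]) (auto simp: mono_val_term_def nsmul_Fin)
    also have "\<dots> = pc_nu v I a i g"
      unfolding pc_nu_def using \<gamma>(1) i lim[OF i] by (simp add: mono_val_shift[OF V])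
    finally show "v (poly g (a i)) = pc_nu v I a i g" .
  qed
qed

lemma eventually_taylor_coeff_val_const:
  assumes "valuation v" "I \<noteq> {}" "\<not> has_max I" "\<forall>f. degree f < degree g \<longrightarrow> fixed_by v I a f"
  obtains C where "\<forall>k\<in>{1..degree g}. C k \<noteq> Minf"
    "eventually_in (Istar I) (\<lambda>i. \<forall>k\<in>{1..degree g}. v (coeff (pcompose g [:a i, 1:]) k) = C k)"
proof -
  have "\<exists>C. C \<noteq> Minf \<and> eventually_in I (\<lambda>i. v (coeff (pcompose g [:a i, 1:]) k) = C)"
    if k: "k \<in> {1..degree g}" for k
  proof -
    have "degree (hasse_deriv g k) < degree g" using degree_hasse_deriv[of g k] k by auto
    then obtain i0 where "i0 \<in> I" "\<forall>i\<in>I. \<forall>j\<in>I. i0 \<le> i \<and> i0 \<le> j \<longrightarrow>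
        v (poly (hasse_deriv g k) (a i)) = v (poly (hasse_deriv g k) (a j))"
      using assms(4) unfolding fixed_by_def by blast
    then show ?thesis
      unfolding eventually_in_def poly_hasse_deriv using val_neq_Minf[OF assms(1)] by blast
  qed
  then obtain C where "\<forall>k\<in>{1..degree g}. C k \<noteq> Minf \<and>
      eventually_in I (\<lambda>i. v (coeff (pcompose g [:a i, 1:]) k) = C k)"
    by metis
  moreover from this
  have "eventually_in I (\<lambda>i. \<forall>k\<in>{1..degree g}. v (coeff (pcompose g [:a i, 1:]) k) = C k)"
    by (intro eventually_in_ball_finite[OF assms(2)]) auto
  ultimately show ?thesis using that Istar_eq_of_not_has_max[OF assms(3)] by auto
qed

lemma val_poly_eq_pc_nu_of_unique_min:
  assumes V: "valuation v" and P: "pseudo_cauchy v I a"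
    and ij: "i \<in> Istar I" "j \<in> Istar I" "i < j"
    and h: "h \<le> degree g" "\<forall>k\<le>degree g. k \<noteq> h \<longrightarrow>
      mono_val_term v g (a i) (pc_gamma v I a i) h < mono_val_term v g (a i) (pc_gamma v I a i) k"
    and coeffs: "\<forall>k\<in>{1..degree g}.
      v (coeff (pcompose g [:a j, 1:]) k) = v (coeff (pcompose g [:a i, 1:]) k)"
  shows "v (poly g (a j)) = pc_nu v I a j g"
proof -
  let ?T = "\<lambda>i k. mono_val_term v g (a i) (pc_gamma v I a i) k"
  have "j \<in> I" using ij(2) Istar_subset by auto
  then have val_j: "v (poly g (a j)) = ?T i h"
    by (rule val_poly_eq_mono_val_term[OF V pseudo_cauchy_val_diff[OF V P ij(1) _ ij(3)] h])
  have "v (poly g (a j)) \<le> ?T j k" if k: "k \<le> degree g" for k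
  proof (cases "k = 0")
    case True then show ?thesis by simp
  next
    case False
    have "?T i h \<le> ?T i k" using h(2) k by (cases "k = h") (auto intro: less_imp_le)
    also have "\<dots> \<le> ?T j k"
    proof -
      have "nsmul k (pc_gamma v I a i) \<le> nsmul k (pc_gamma v I a j)"
        using pc_gamma_strict_mono[OF V P ij] by (intro nsmul_extended_mono) simp
      then show ?thesis using coeffs False k by (simp add: mono_val_term_def add_left_mono)
    qed
    finally show ?thesis using val_j by simp
  qed
  then show ?thesis
    unfolding pc_nu_def using mono_val_eq_val_poly[of g v "a j" "pc_gamma v I a j"] by simp
qed

lemma unique_min_of_Min_less_0:
  fixes f :: "nat \<Rightarrow> 'g::linorder extended"
  assumes "Min (f ` {..d}) < f 0" "\<forall>k\<in>{1..d}. \<forall>l\<in>{1..d}. k \<noteq> l \<longrightarrow> f k \<noteq> Pinf \<longrightarrow> f k \<noteq> f l"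
  obtains h where "h \<le> d" "\<forall>k\<le>d. k \<noteq> h \<longrightarrow> f h < f k"
proof -
  have "Min (f ` {..d}) \<in> f ` {..d}" by (intro Min_in) auto
  then obtain k0 where k0: "k0 \<le> d" "f k0 = Min (f ` {..d})" by (metis atMost_iff imageE)
  then have "k0 \<in> {1..d}" using assms(1) by (cases k0) auto
  have "Min (f ` {1..d}) \<le> f k0" using \<open>k0 \<in> {1..d}\<close> by (intro Min_le) auto
  then have min1: "Min (f ` {1..d}) < f 0" using k0(2) assms(1) by order
  then have "Min (f ` {1..d}) \<noteq> Pinf" by (cases "f 0") auto
  then obtain h where h: "h \<in> {1..d}" "f h = Min (f ` {1..d})" "\<forall>k\<in>{1..d}. k \<noteq> h \<longrightarrow> f h < f k"
    using Min_attained_strictly[OF finite_atLeastAtMost _ _ assms(2)] \<open>k0 \<in> {1..d}\<close> by blast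
  have "f h < f k" if "k \<le> d" "k \<noteq> h" for k
    using h min1 that by (cases "k = 0") auto
  then show ?thesis using that h(1) by auto
qed

lemma val_poly_eq_pc_nu_of_fixed:
  assumes V: "valuation v" and P: "pseudo_cauchy v I a" and nm: "\<not> has_max (Istar I)"
    and "\<not> has_max I" and fixed: "\<forall>f. degree f < degree g \<longrightarrow> fixed_by v I a f"
  shows "eventually_in (Istar I) (\<lambda>i. v (poly g (a i)) = pc_nu v I a i g)"
proof -
  let ?S = "Istar I" and ?K = "{1..degree g}"
  let ?T = "\<lambda>i k. mono_val_term v g (a i) (pc_gamma v I a i) k"
  let ?coeffs_eq = "\<lambda>i C. \<forall>k\<in>?K. v (coeff (pcompose g [:a i, 1:]) k) = C k"
  have S: "?S \<noteq> {}" by (rule Istar_nonempty[OF P])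
  obtain \<gamma> where \<gamma>: "\<forall>i\<in>?S. pc_gamma v I a i = Fin (\<gamma> i)" "strict_mono_on ?S \<gamma>"
    using pc_gamma_Fin[OF V P nm] by blast
  obtain C where C: "\<forall>k\<in>?K. C k \<noteq> Minf" "eventually_in ?S (\<lambda>i. ?coeffs_eq i C)"
    using eventually_taylor_coeff_val_const[OF V _ assms(4) fixed] S Istar_subset by blast
  have "eventually_in ?S (\<lambda>i. \<forall>k\<in>?K. \<forall>l\<in>?K. k \<noteq> l \<longrightarrow> C k \<noteq> Pinf \<longrightarrow>
          C k + nsmul k (Fin (\<gamma> i)) \<noteq> C l + nsmul l (Fin (\<gamma> i)))"
    using C(1) by (intro eventually_lines_distinct[OF nm S \<gamma>(2)]) auto
  with C(2) have "eventually_in ?S (\<lambda>i. ?coeffs_eq i C \<and> (\<forall>k\<in>?K. \<forall>l\<in>?K. k \<noteq> l \<longrightarrow> C k \<noteq> Pinf \<longrightarrow>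
          C k + nsmul k (Fin (\<gamma> i)) \<noteq> C l + nsmul l (Fin (\<gamma> i))))"
    by (rule eventually_in_conj)
  then have "eventually_in ?S (\<lambda>i. ?coeffs_eq i C \<and>
      (\<forall>k\<in>?K. \<forall>l\<in>?K. k \<noteq> l \<longrightarrow> ?T i k \<noteq> Pinf \<longrightarrow> ?T i k \<noteq> ?T i l))"
    by (rule eventually_in_mono) (auto simp: mono_val_term_def \<gamma>(1) nsmul_Fin)
  then obtain i1 where i1: "i1 \<in> ?S" and good: "\<And>i. i \<in> ?S \<Longrightarrow> i1 \<le> i \<Longrightarrow> ?coeffs_eq i C \<and>
      (\<forall>k\<in>?K. \<forall>l\<in>?K. k \<noteq> l \<longrightarrow> ?T i k \<noteq> Pinf \<longrightarrow> ?T i k \<noteq> ?T i l)"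
    unfolding eventually_in_def by blast
  show ?thesis
  proof (cases "\<forall>i\<in>?S. i1 \<le> i \<longrightarrow> v (poly g (a i)) = pc_nu v I a i g")
    case True then show ?thesis using i1 unfolding eventually_in_def by blast
  next
    case False
    then obtain i where i: "i \<in> ?S" "i1 \<le> i" "v (poly g (a i)) \<noteq> pc_nu v I a i g" by blast
    have "Min (?T i ` {..degree g}) < ?T i 0"
      using i(3) mono_val_le_term[of 0 g v "a i" "pc_gamma v I a i"]
      by (simp add: pc_nu_def flip: mono_val_eq_Min)
    then obtain h where h: "h \<le> degree g" "\<forall>k\<le>degree g. k \<noteq> h \<longrightarrow> ?T i h < ?T i k"
      using unique_min_of_Min_less_0 good[OF i(1,2)] by blast
    obtain j0 where j0: "j0 \<in> ?S" "i < j0" using ex_greater_of_not_has_max[OF nm i(1)] by blast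
    have "v (poly g (a j)) = pc_nu v I a j g" if j: "j \<in> ?S" "j0 \<le> j" for j
      using val_poly_eq_pc_nu_of_unique_min[OF V P i(1) j(1) _ h] good[OF i(1,2)] good[OF j(1)] i(2) j0 j
      by auto
    then show ?thesis unfolding eventually_in_def using j0(1) by blast
  qed
qed

theorem lemma5p7:
  fixes v :: "'a::field \<Rightarrow> 'g::linordered_ab_group_add extended"
    and I :: "'i::wellorder set" and a :: "'i \<Rightarrow> 'a" and g :: "'a poly"
  assumes "valuation v"
    and "pseudo_cauchy v I a"
    and "\<not> has_max (Istar I)"
    and "transcendental_type v I a \<or> (algebraic_type v I a \<and> gamma_finite v I a)"
    and "\<forall>f. degree f < degree g \<longrightarrow> fixed_by v I a f"
  shows "\<exists>i0\<in>Istar I. \<forall>i\<in>Istar I. i0 \<le> i \<longrightarrow> v (poly g (a i)) = pc_nu v I a i g"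
proof -
  have "eventually_in (Istar I) (\<lambda>i. v (poly g (a i)) = pc_nu v I a i g)"
  proof (cases "has_max I")
    case True
    then show ?thesis by (rule val_poly_eq_pc_nu_of_has_max[OF assms(1-3)])
  next
    case False
    then show ?thesis by (rule val_poly_eq_pc_nu_of_fixed[OF assms(1-3) _ assms(5)])
  qed
  then show ?thesis unfolding eventually_in_def .
qed

end
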